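(* Let $K$ be a field and $X$ a finite connected poset. Let $\theta:B\to B$ be an admissible bijection which is monotone on maximal chains in $X$, and let $\sigma:X^2_<\to K^*$ be compatible with $\theta$. Then there exists an elementary Lie automorphism $\varphi$ of $I(X,K)$ such that $\varphi(e_{xy})=\sigma(x,y)\theta(e_{xy})$ for all $x<y$.
   Context: A walk is a sequence $u_0,\dots,u_m$ in $X$ such that for each $i$ one of $u_i,u_{i+1}$ covers the other; closed if $u_0=u_m$; $X$ is connected if any two elements are joined by a walk. $I(X,K)$ is the incidence algebra: functions $f:X\times X\to K$ with $f(x,y)=0$ unless $x\le y$, product $(fg)(x,y)=\sum_{x\le t\le y}f(x,t)g(t,y)$; $e_{xy}$ ($x\le y$) is the basis element equal to $1$ at $(x,y)$ and $0$ elsewhere. $B=\{e_{xy}:x<y\}$, $X^2_<=\{(x,y):x<y\}$. A Lie automorphism is a bijective linear map preserving $[f,g]=fg-gf$. With $l(\lfloor x,y\rfloor)$ the maximal length of a chain in $\{z:x\le z\le y\}$ and $L_i=\mathrm{span}_K\{e_{xy}:l(\lfloor x,y\rfloor)=i\}$, for a Lie automorphism $\psi$ let $\widetilde\psi$ send $e_{xy}\in L_i$ to the $L_i$-component of $\psi(e_{xy})$; a Lie automorphism is elementary if it equals $\widetilde\psi$ for some Lie automorphism $\psi$ (equivalently, it maps each $L_i$ into $L_i$). $\theta$ is monotone on maximal chains if for every maximal chain $u_1<\dots<u_m$ of $X$ there is a maximal chain $v_1<\dots<v_m$ with either $\theta(e_{u_iu_j})=e_{v_iv_j}$ for all $i<j$,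 or $\theta(e_{u_iu_j})=e_{v_{m-j+1}v_{m-i+1}}$ for all $i<j$. For a closed walk $\Gamma:u_0,\dots,u_m=u_0$ and $z\in X$: $s^+(z)$ = number of $i$ with $u_i<u_{i+1}$ and $\theta(e_{zw})=e_{u_iu_{i+1}}$ for some $w>z$; $s^-(z)$ = number of $i$ with $u_i>u_{i+1}$ and $\theta(e_{zw})=e_{u_{i+1}u_i}$ for some $w>z$; $t^+(z)$ = number of $i$ with $u_i<u_{i+1}$ and $\theta(e_{wz})=e_{u_iu_{i+1}}$ for some $w<z$; $t^-(z)$ = number of $i$ with $u_i>u_{i+1}$ and $\theta(e_{wz})=e_{u_{i+1}u_i}$ for some $w<z$. $\theta$ is admissible if $s^+(z)-s^-(z)=t^+(z)-t^-(z)$ for all closed walks and all $z$. $\sigma$ is compatible with $\theta$ if for all $x<y<z$: $\sigma(x,z)=\sigma(x,y)\sigma(y,z)$ whenever $\theta(e_{xz})=\theta(e_{xy})\theta(e_{yz})$, and $\sigma(x,z)=-\sigma(x,y)\sigma(y,z)$ whenever $\theta(e_{xz})=\theta(e_{yz})\theta(e_{xy})$. *)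

theory Defs
  imports Main
begin

definition covers :: "'a::order \<Rightarrow> 'a \<Rightarrow> bool" where
  "covers y x \<longleftrightarrow> x < y \<and> \<not> (\<exists>z. x < z \<and> z < y)"

definition is_walk :: "'a::order list \<Rightarrow> bool" where
  "is_walk us \<longleftrightarrow> us \<noteq> [] \<and>
     (\<forall>i. Suc i < length us \<longrightarrow> covers (us ! i) (us ! Suc i) \<or> covers (us ! Suc i) (us ! i))"

definition is_closed_walk :: "'a::order list \<Rightarrow> bool" where
  "is_closed_walk us \<longleftrightarrow> is_walk us \<and> hd us = last us"

definition poset_connected :: "'a::order itself \<Rightarrow> bool" where
  "poset_connected _ \<longleftrightarrow> (\<forall>x y::'a. \<exists>us. is_walk us \<and> hd us = x \<and> last us = y)"

definition is_chain :: "'a::order set \<Rightarrow> bool" where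
  "is_chain C \<longleftrightarrow> (\<forall>x\<in>C. \<forall>y\<in>C. x \<le> y \<or> y \<le> x)"

definition is_max_chain :: "'a::order list \<Rightarrow> bool" where
  "is_max_chain us \<longleftrightarrow> sorted_wrt (<) us \<and>
     (\<forall>C. is_chain C \<and> set us \<subseteq> C \<longrightarrow> C = set us)"

definition chain_len :: "'a::{order,finite} \<Rightarrow> 'a \<Rightarrow> nat" where
  "chain_len x y = Max ((\<lambda>C. card C - 1) ` {C. C \<subseteq> {z. x \<le> z \<and> z \<le> y} \<and> is_chain C})"

definition inc_alg :: "('a::order \<Rightarrow> 'a \<Rightarrow> 'k::field) set" where
  "inc_alg = {f. \<forall>x y. \<not> x \<le> y \<longrightarrow> f x y = 0}"

definition inc_mult :: "('a::{order,finite} \<Rightarrow> 'a \<Rightarrow> 'k::field) \<Rightarrow> ('a \<Rightarrow> 'a \<Rightarrow> 'k) \<Rightarrow> 'a \<Rightarrow> 'a \<Rightarrow> 'k" where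
  "inc_mult f g x y = (\<Sum>t\<in>{t. x \<le> t \<and> t \<le> y}. f x t * g t y)"

definition inc_e :: "'a::order \<Rightarrow> 'a \<Rightarrow> 'a \<Rightarrow> 'a \<Rightarrow> 'k::field" where
  "inc_e x y = (\<lambda>a b. if a = x \<and> b = y then 1 else 0)"

definition inc_add :: "('a \<Rightarrow> 'a \<Rightarrow> 'k::field) \<Rightarrow> ('a \<Rightarrow> 'a \<Rightarrow> 'k) \<Rightarrow> 'a \<Rightarrow> 'a \<Rightarrow> 'k" where
  "inc_add f g = (\<lambda>a b. f a b + g a b)"

definition inc_smult :: "'k::field \<Rightarrow> ('a \<Rightarrow> 'a \<Rightarrow> 'k) \<Rightarrow> 'a \<Rightarrow> 'a \<Rightarrow> 'k" where
  "inc_smult c f = (\<lambda>a b. c * f a b)"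

definition lie_bracket :: "('a::{order,finite} \<Rightarrow> 'a \<Rightarrow> 'k::field) \<Rightarrow> ('a \<Rightarrow> 'a \<Rightarrow> 'k) \<Rightarrow> 'a \<Rightarrow> 'a \<Rightarrow> 'k" where
  "lie_bracket f g = (\<lambda>a b. inc_mult f g a b - inc_mult g f a b)"

definition lie_automorphism :: "(('a::{order,finite} \<Rightarrow> 'a \<Rightarrow> 'k::field) \<Rightarrow> ('a \<Rightarrow> 'a \<Rightarrow> 'k)) \<Rightarrow> bool" where
  "lie_automorphism \<phi> \<longleftrightarrow> bij_betw \<phi> inc_alg inc_alg \<and>
     (\<forall>f\<in>inc_alg. \<forall>g\<in>inc_alg. \<phi> (inc_add f g) = inc_add (\<phi> f) (\<phi> g)) \<and>
     (\<forall>c. \<forall>f\<in>inc_alg. \<phi> (inc_smult c f) = inc_smult c (\<phi> f)) \<and>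
     (\<forall>f\<in>inc_alg. \<forall>g\<in>inc_alg. \<phi> (lie_bracket f g) = lie_bracket (\<phi> f) (\<phi> g))"

text \<open>L_i = span {e_xy : l(\<lfloor>x,y\<rfloor>) = i}, i.e. the elements of I(X,K) supported on such pairs.\<close>
definition L_space :: "nat \<Rightarrow> ('a::{order,finite} \<Rightarrow> 'a \<Rightarrow> 'k::field) set" where
  "L_space i = {f. \<forall>a b. f a b \<noteq> 0 \<longrightarrow> a \<le> b \<and> chain_len a b = i}"

definition elementary :: "(('a::{order,finite} \<Rightarrow> 'a \<Rightarrow> 'k::field) \<Rightarrow> ('a \<Rightarrow> 'a \<Rightarrow> 'k)) \<Rightarrow> bool" where
  "elementary \<phi> \<longleftrightarrow> lie_automorphism \<phi> \<and> (\<forall>i. \<forall>f\<in>L_space i. \<phi> f \<in> L_space i)"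

section \<open>Conditions on \<theta> : B \<rightarrow> B (given by a map on X^2_<, \<theta>(e_xy) = e_{\<theta>(x,y)}) and \<sigma>\<close>

definition strict_pairs :: "('a::order \<times> 'a) set" where
  "strict_pairs = {(x, y). x < y}"

definition monotone_on_max_chains :: "('a::order \<times> 'a \<Rightarrow> 'a \<times> 'a) \<Rightarrow> bool" where
  "monotone_on_max_chains \<theta> \<longleftrightarrow>
     (\<forall>us. is_max_chain us \<longrightarrow>
        (\<exists>vs. is_max_chain vs \<and> length vs = length us \<and>
           ((\<forall>i j. i < j \<and> j < length us \<longrightarrow> \<theta> (us ! i, us ! j) = (vs ! i, vs ! j)) \<or>
            (\<forall>i j. i < j \<and> j < length us \<longrightarrow>
               \<theta> (us ! i, us ! j) = (vs ! (length us - 1 - j), vs ! (length us - 1 - i))))))"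

definition s_plus :: "('a::order \<times> 'a \<Rightarrow> 'a \<times> 'a) \<Rightarrow> 'a list \<Rightarrow> 'a \<Rightarrow> nat" where
  "s_plus \<theta> us z = card {i. Suc i < length us \<and> us ! i < us ! Suc i \<and>
      (\<exists>w. z < w \<and> \<theta> (z, w) = (us ! i, us ! Suc i))}"

definition s_minus :: "('a::order \<times> 'a \<Rightarrow> 'a \<times> 'a) \<Rightarrow> 'a list \<Rightarrow> 'a \<Rightarrow> nat" where
  "s_minus \<theta> us z = card {i. Suc i < length us \<and> us ! i > us ! Suc i \<and>
      (\<exists>w. z < w \<and> \<theta> (z, w) = (us ! Suc i, us ! i))}"

definition t_plus :: "('a::order \<times> 'a \<Rightarrow> 'a \<times> 'a) \<Rightarrow> 'a list \<Rightarrow> 'a \<Rightarrow> nat" where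
  "t_plus \<theta> us z = card {i. Suc i < length us \<and> us ! i < us ! Suc i \<and>
      (\<exists>w. w < z \<and> \<theta> (w, z) = (us ! i, us ! Suc i))}"

definition t_minus :: "('a::order \<times> 'a \<Rightarrow> 'a \<times> 'a) \<Rightarrow> 'a list \<Rightarrow> 'a \<Rightarrow> nat" where
  "t_minus \<theta> us z = card {i. Suc i < length us \<and> us ! i > us ! Suc i \<and>
      (\<exists>w. w < z \<and> \<theta> (w, z) = (us ! Suc i, us ! i))}"

definition admissible :: "('a::order \<times> 'a \<Rightarrow> 'a \<times> 'a) \<Rightarrow> bool" where
  "admissible \<theta> \<longleftrightarrow> (\<forall>us z. is_closed_walk us \<longrightarrow>
     int (s_plus \<theta> us z) - int (s_minus \<theta> us z) = int (t_plus \<theta> us z) - int (t_minus \<theta> us z))"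

definition compatible :: "('a::{order,finite} \<Rightarrow> 'a \<Rightarrow> 'k::field) \<Rightarrow> ('a \<times> 'a \<Rightarrow> 'a \<times> 'a) \<Rightarrow> bool" where
  "compatible \<sigma> \<theta> \<longleftrightarrow> (\<forall>x y z. x < y \<and> y < z \<longrightarrow>
     ((inc_e (fst (\<theta> (x, z))) (snd (\<theta> (x, z))) :: 'a \<Rightarrow> 'a \<Rightarrow> 'k) =
        inc_mult (inc_e (fst (\<theta> (x, y))) (snd (\<theta> (x, y)))) (inc_e (fst (\<theta> (y, z))) (snd (\<theta> (y, z))))
        \<longrightarrow> \<sigma> x z = \<sigma> x y * \<sigma> y z) \<and>
     ((inc_e (fst (\<theta> (x, z))) (snd (\<theta> (x, z))) :: 'a \<Rightarrow> 'a \<Rightarrow> 'k) =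
        inc_mult (inc_e (fst (\<theta> (y, z))) (snd (\<theta> (y, z)))) (inc_e (fst (\<theta> (x, y))) (snd (\<theta> (x, y))))
        \<longrightarrow> \<sigma> x z = - (\<sigma> x y * \<sigma> y z)))"

end

theory Submission
  imports Defs "HOL-Analysis.Cartesian_Space"
begin

(* Off the diagonal the map is forced: phi (e_xy) = sigma(x,y) e_theta(x,y). Monotonicity on
   maximal chains yields the key local fact: theta maps every triple x < y < z onto a triple
   a < b < c with theta(x,z) = (a,c) and {theta(x,y), theta(y,z)} = {(a,b), (b,c)}. Together
   with the compatibility of sigma this makes phi respect the off-diagonal part of the bracket,
   and comparing indices along maximal chains shows that theta preserves the lengths l(x,y).

   On the diagonal, phi must satisfy phi(f)(a,a) - phi(f)(b,b) = f(x,x) - f(y,y) whenever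
   theta(x,y) = (a,b). For each z this asks for a potential D_z on X with
   D_z(b) - D_z(a) = [y = z] - [x = z]. Admissibility says precisely that the increments
   prescribed along covering pairs sum to zero around every closed walk, so D_z exists since X
   is connected, and the triple description extends the increments to all pairs a < b.
   Setting phi(f)(a,a) = sum_z f(z,z) (D_z(a) + [z = r]) for a base point r gives an injective,
   hence bijective, map on the diagonal. *)

section \<open>Maximal chains and the length function\<close>

lemma finite_chain_sorted_list:
  fixes C :: "'a::order set"
  assumes "finite C" "is_chain C"
  shows "\<exists>us. sorted_wrt (<) us \<and> set us = C"
  using assms
proof (induction C rule: finite_psubset_induct)
  case (psubset C)
  show ?case
  proof (cases "C = {}")
    case False
    obtain m where m: "m \<in> C" "\<And>c. c \<in> C \<Longrightarrow> c \<le> m \<Longrightarrow> c = m"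
      using finite_has_minimal[OF psubset.hyps(1) False] by blast
    have m_le: "\<forall>c\<in>C. m \<le> c"
      using m psubset.prems unfolding is_chain_def by metis
    have "is_chain (C - {m})"
      using psubset.prems unfolding is_chain_def by blast
    then obtain us where "sorted_wrt (<) us" "set us = C - {m}"
      using psubset.IH m(1) by blast
    then show ?thesis
      using m_le m(1) by (intro exI[of _ "m # us"]) (auto simp: order_le_less)
  qed simp
qed

lemma ex_max_chain_superset:
  fixes S :: "'a::{order,finite} set"
  assumes "is_chain S"
  shows "\<exists>us. is_max_chain us \<and> S \<subseteq> set us"
proof -
  let ?Q = "{C. is_chain C \<and> S \<subseteq> C}"
  obtain C where C: "C \<in> ?Q" and C_max: "\<And>C'. C' \<in> ?Q \<Longrightarrow> card C' \<le> card C"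
    using ex_has_greatest_nat[of "\<lambda>C. C \<in> ?Q" S card "Suc (card (UNIV :: 'a set))"] assms
    by (auto simp: less_Suc_eq_le card_mono)
  obtain us where us: "sorted_wrt (<) us" "set us = C"
    using finite_chain_sorted_list[of C] C by auto
  have "C' = C" if "is_chain C'" "C \<subseteq> C'" for C'
    using that C C_max[of C'] by (intro card_seteq[symmetric]) auto
  then have "is_max_chain us"
    unfolding is_max_chain_def using us by blast
  then show ?thesis using C us(2) by auto
qed

lemma sorted_wrt_less_unique:
  fixes xs ys :: "'a::order list"
  assumes "sorted_wrt (<) xs" "sorted_wrt (<) ys" "set xs = set ys"
  shows "xs = ys"
  using assms
proof (induction xs arbitrary: ys)
  case (Cons x xs)
  then obtain y ys' where ys: "ys = y # ys'" by (cases ys) auto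
  have "x = y"
  proof (rule ccontr)
    assume "x \<noteq> y"
    then have "y \<in> set xs" "x \<in> set ys'" using Cons.prems(3) ys by auto
    then show False using Cons.prems(1,2) ys by fastforce
  qed
  moreover have "set xs = set ys'"
    using Cons.prems ys \<open>x = y\<close> by (auto simp: insert_eq_iff)
  ultimately show ?case using Cons ys by simp
qed simp

lemma max_chain_nth_less_iff:
  assumes "is_max_chain us" "i < length us" "j < length us"
  shows "us ! i < us ! j \<longleftrightarrow> i < j"
  using assms sorted_wrt_nth_less[of "(<)" us] unfolding is_max_chain_def
  by (metis less_asym' linorder_neqE_nat order_less_irrefl)

lemma max_chain_nth_le_iff:
  assumes "is_max_chain us" "i < length us" "j < length us"
  shows "us ! i \<le> us ! j \<longleftrightarrow> i \<le> j"
  using max_chain_nth_less_iff[OF assms] max_chain_nth_less_iff[OF assms(1,3,2)]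
  by (metis le_less not_le order_less_imp_not_less)

lemma is_chain_max_chain:
  assumes "is_max_chain us"
  shows "is_chain (set us)"
  unfolding is_chain_def
proof (intro ballI)
  fix x y assume "x \<in> set us" "y \<in> set us"
  then obtain i j where "i < length us" "j < length us" "x = us ! i" "y = us ! j"
    by (metis in_set_conv_nth)
  then show "x \<le> y \<or> y \<le> x" using max_chain_nth_le_iff[OF assms] by (metis nat_le_linear)
qed

lemma chain_len_ge:
  fixes x y :: "'a::{order,finite}"
  assumes "C \<subseteq> {z. x \<le> z \<and> z \<le> y}" "is_chain C"
  shows "card C - 1 \<le> chain_len x y"
  unfolding chain_len_def using assms by (intro Max_ge) auto

lemma chain_len_attained:
  fixes x y :: "'a::{order,finite}"
  obtains C where "C \<subseteq> {z. x \<le> z \<and> z \<le> y}" "is_chain C" "chain_len x y = card C - 1"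
proof -
  have "chain_len x y \<in> (\<lambda>C. card C - 1) ` {C. C \<subseteq> {z. x \<le> z \<and> z \<le> y} \<and> is_chain C}"
    unfolding chain_len_def by (rule Max_in) (auto intro!: exI[of _ "{}"] simp: is_chain_def)
  then show ?thesis using that by auto
qed

lemma chain_len_refl: "chain_len (x::'a::{order,finite}) x = 0"
proof -
  obtain C where C: "C \<subseteq> {z. x \<le> z \<and> z \<le> x}" "chain_len x x = card C - 1"
    by (rule chain_len_attained)
  have "C \<subseteq> {x}" using C(1) by (auto intro: antisym)
  then have "card C \<le> 1" using card_mono[of "{x}" C] by simp
  then show ?thesis using C(2) by simp
qed

lemma chain_len_ge_max_chain_nth:
  assumes "is_max_chain us" "i \<le> j" "j < length us"
  shows "j - i \<le> chain_len (us ! i) (us ! j :: 'a::{order,finite})"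
proof -
  let ?C = "(!) us ` {i..j}"
  have "inj_on ((!) us) {i..j}"
  proof (rule inj_onI)
    fix k l assume "k \<in> {i..j}" "l \<in> {i..j}" "us ! k = us ! l"
    then have "k < length us" "l < length us" using assms(3) by auto
    then show "k = l"
      using max_chain_nth_le_iff[OF assms(1)] \<open>us ! k = us ! l\<close> by (metis order_refl le_antisym)
  qed
  then have "card ?C = j - i + 1"
    using card_image assms(2) by fastforce
  moreover have "?C \<subseteq> {z. us ! i \<le> z \<and> z \<le> us ! j}"
    using max_chain_nth_le_iff[OF assms(1)] assms(3) by auto
  moreover have "is_chain ?C"
    using is_chain_max_chain[OF assms(1)] assms(3) unfolding is_chain_def by auto
  ultimately show ?thesis using chain_len_ge[of ?C "us ! i" "us ! j"] by simp
qed

lemma chain_len_on_max_chain: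
  fixes x y :: "'a::{order,finite}"
  assumes "x < y"
  obtains us i j where "is_max_chain us" "i < j" "j < length us" "us ! i = x" "us ! j = y"
    "chain_len x y = j - i"
proof -
  obtain C where C: "C \<subseteq> {z. x \<le> z \<and> z \<le> y}" "is_chain C" "chain_len x y = card C - 1"
    by (rule chain_len_attained)
  have "is_chain (C \<union> {x, y})"
    using C(1,2) assms unfolding is_chain_def by auto
  then obtain us where us: "is_max_chain us" "C \<union> {x, y} \<subseteq> set us"
    using ex_max_chain_superset by blast
  then obtain i j where ij: "i < length us" "us ! i = x" "j < length us" "us ! j = y"
    by (auto simp: in_set_conv_nth)
  have "i < j" using max_chain_nth_less_iff[OF us(1) ij(1,3)] ij assms by simp
  have "C \<subseteq> (!) us ` {i..j}"
  proof
    fix c assume "c \<in> C"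
    then obtain k where k: "k < length us" "us ! k = c"
      using us(2) by (metis in_set_conv_nth subsetD UnI1)
    have "x \<le> c" "c \<le> y" using \<open>c \<in> C\<close> C(1) by auto
    then have "i \<le> k" "k \<le> j" using max_chain_nth_le_iff[OF us(1)] ij k by metis+
    then show "c \<in> (!) us ` {i..j}" using k by auto
  qed
  then have "card C \<le> card ((!) us ` {i..j})" by (intro card_mono) auto
  also have "\<dots> \<le> card {i..j}" by (rule card_image_le) simp
  finally have "chain_len x y \<le> j - i" using C(3) by simp
  moreover have "j - i \<le> chain_len x y"
    using chain_len_ge_max_chain_nth[OF us(1)] \<open>i < j\<close> ij by fastforce
  ultimately show ?thesis using that us(1) \<open>i < j\<close> ij by (metis antisym)
qed

section \<open>Walk sums and potentials\<close>

definition adjacent :: "'a::order \<Rightarrow> 'a \<Rightarrow> bool" where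
  "adjacent u v \<longleftrightarrow> covers u v \<or> covers v u"

lemma adjacent_commute: "adjacent u v \<longleftrightarrow> adjacent v u"
  unfolding adjacent_def by blast

lemma is_walk_iff_successively: "is_walk us \<longleftrightarrow> us \<noteq> [] \<and> successively adjacent us"
  unfolding is_walk_def adjacent_def successively_conv_nth by simp

lemma successively_eq_hd_last:
  "successively (\<lambda>x y. g x = g y) xs \<Longrightarrow> xs \<noteq> [] \<Longrightarrow> g (hd xs) = g (last xs)"
  by (induction xs rule: induct_list012) auto

lemma connected_const:
  assumes "poset_connected TYPE('a::order)" "\<And>x y :: 'a. x < y \<Longrightarrow> g x = g y"
  shows "g (u :: 'a) = g v"
proof -
  obtain us where us: "is_walk us" "hd us = u" "last us = v"
    using assms(1) unfolding poset_connected_def by blast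
  have "successively (\<lambda>x y. g x = g y) us"
    using us(1) assms(2) unfolding is_walk_iff_successively adjacent_def covers_def
    by (auto elim!: successively_mono)
  then show ?thesis using successively_eq_hd_last us is_walk_iff_successively by metis
qed

definition edge_flow :: "('a::order \<times> 'a \<Rightarrow> 'a \<times> 'a) \<Rightarrow> 'a \<Rightarrow> 'a \<Rightarrow> 'a \<Rightarrow> int" where
  "edge_flow \<theta> z a b =
     of_bool (\<exists>w. w < z \<and> \<theta> (w, z) = (a, b)) - of_bool (\<exists>w. z < w \<and> \<theta> (z, w) = (a, b))"

definition walk_step :: "('a::order \<times> 'a \<Rightarrow> 'a \<times> 'a) \<Rightarrow> 'a \<Rightarrow> 'a \<Rightarrow> 'a \<Rightarrow> int" where
  "walk_step \<theta> z u v =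
     (if u < v then edge_flow \<theta> z u v else if v < u then - edge_flow \<theta> z v u else 0)"

fun walk_sum :: "('a::order \<times> 'a \<Rightarrow> 'a \<times> 'a) \<Rightarrow> 'a \<Rightarrow> 'a list \<Rightarrow> int" where
  "walk_sum \<theta> z (u # v # us) = walk_step \<theta> z u v + walk_sum \<theta> z (v # us)"
| "walk_sum \<theta> z _ = 0"

lemma walk_step_commute: "walk_step \<theta> z v u = - walk_step \<theta> z u v"
  unfolding walk_step_def by auto

lemma walk_sum_append:
  "xs \<noteq> [] \<Longrightarrow> ys \<noteq> [] \<Longrightarrow>
    walk_sum \<theta> z (xs @ ys) = walk_sum \<theta> z xs + walk_step \<theta> z (last xs) (hd ys) + walk_sum \<theta> z ys"
  by (induction xs rule: induct_list012) (auto simp: neq_Nil_conv)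

lemma walk_sum_rev: "walk_sum \<theta> z (rev us) = - walk_sum \<theta> z us"
proof (induction us rule: induct_list012)
  case (3 u v us)
  have "walk_sum \<theta> z (rev (u # v # us)) = walk_sum \<theta> z (rev (v # us)) + walk_step \<theta> z v u"
    using walk_sum_append[of "rev (v # us)" "[u]"] by simp
  then show ?case using "3.IH"(2) walk_step_commute[of \<theta> z v u] by simp
qed simp_all

lemma walk_sum_conv_sum:
  "walk_sum \<theta> z us = (\<Sum>i<length us - 1. walk_step \<theta> z (us ! i) (us ! Suc i))"
proof (induction us rule: induct_list012)
  case (3 u v us)
  then show ?case by (simp add: sum.lessThan_Suc_shift del: sum.lessThan_Suc)
qed simp_all

lemma walk_sum_closed:
  assumes "admissible \<theta>" "is_closed_walk us"
  shows "walk_sum \<theta> z us = 0"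
proof -
  let ?up = "\<lambda>i. us ! i < us ! Suc i" and ?down = "\<lambda>i. us ! i > us ! Suc i"
  let ?src = "\<lambda>a b. \<exists>w. z < w \<and> \<theta> (z, w) = (a, b)"
  let ?tgt = "\<lambda>a b. \<exists>w. w < z \<and> \<theta> (w, z) = (a, b)"
  have count: "(\<Sum>i<length us - 1. of_bool (P i)) = int (card {i. Suc i < length us \<and> P i})"
    for P
  proof -
    have "{..<length us - 1} \<inter> {i. P i} = {i. Suc i < length us \<and> P i}" by auto
    then show ?thesis by (simp add: sum_of_bool_eq)
  qed
  have step: "walk_step \<theta> z (us ! i) (us ! Suc i) =
      of_bool (?up i \<and> ?tgt (us ! i) (us ! Suc i)) - of_bool (?up i \<and> ?src (us ! i) (us ! Suc i))
      - of_bool (?down i \<and> ?tgt (us ! Suc i) (us ! i))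
      + of_bool (?down i \<and> ?src (us ! Suc i) (us ! i))" for i
    unfolding walk_step_def edge_flow_def by auto
  have "walk_sum \<theta> z us =
      (\<Sum>i<length us - 1. of_bool (?up i \<and> ?tgt (us ! i) (us ! Suc i)))
      - (\<Sum>i<length us - 1. of_bool (?up i \<and> ?src (us ! i) (us ! Suc i)))
      - (\<Sum>i<length us - 1. of_bool (?down i \<and> ?tgt (us ! Suc i) (us ! i)))
      + (\<Sum>i<length us - 1. of_bool (?down i \<and> ?src (us ! Suc i) (us ! i)))"
    unfolding walk_sum_conv_sum step by (simp only: sum.distrib sum_subtractf)
  also have "\<dots> = int (t_plus \<theta> us z) - int (s_plus \<theta> us z) - int (t_minus \<theta> us z)
      + int (s_minus \<theta> us z)"
    unfolding count t_plus_def s_plus_def t_minus_def s_minus_def ..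
  finally have "walk_sum \<theta> z us = int (t_plus \<theta> us z) - int (s_plus \<theta> us z)
      - int (t_minus \<theta> us z) + int (s_minus \<theta> us z)" .
  moreover have "int (s_plus \<theta> us z) - int (s_minus \<theta> us z)
      = int (t_plus \<theta> us z) - int (t_minus \<theta> us z)"
    using assms unfolding admissible_def by blast
  ultimately show ?thesis by linarith
qed

definition potential :: "('a::order \<times> 'a \<Rightarrow> 'a \<times> 'a) \<Rightarrow> 'a \<Rightarrow> 'a \<Rightarrow> 'a \<Rightarrow> int" where
  "potential \<theta> r z u = walk_sum \<theta> z (SOME us. is_walk us \<and> hd us = r \<and> last us = u)"

lemma potential_walk:
  assumes "poset_connected TYPE('a::order)"
  obtains us where "is_walk us" "hd us = r" "last us = (u :: 'a)"
    "potential \<theta> r z u = walk_sum \<theta> z us"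
proof -
  have "\<exists>us. is_walk us \<and> hd us = r \<and> last us = u"
    using assms unfolding poset_connected_def by blast
  then show ?thesis using that unfolding potential_def by (metis (mono_tags, lifting) someI_ex)
qed

lemma potential_base:
  assumes "poset_connected TYPE('a::order)" "admissible \<theta>"
  shows "potential \<theta> r z (r :: 'a) = 0"
  using potential_walk[OF assms(1)] walk_sum_closed[OF assms(2)] unfolding is_closed_walk_def
  by metis

lemma potential_adjacent:
  assumes "poset_connected TYPE('a::order)" "admissible \<theta>" "adjacent u (v :: 'a)"
  shows "potential \<theta> r z v = potential \<theta> r z u + walk_step \<theta> z u v"
proof -
  obtain us where us: "is_walk us" "hd us = r" "last us = u" "potential \<theta> r z u = walk_sum \<theta> z us"
    using potential_walk[OF assms(1)] by blast
  obtain vs where vs: "is_walk vs" "hd vs = r" "last vs = v" "potential \<theta> r z v = walk_sum \<theta> z vs"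
    using potential_walk[OF assms(1)] by blast
  have "us \<noteq> []" "vs \<noteq> []" using us(1) vs(1) unfolding is_walk_def by auto
  moreover have "successively (\<lambda>x y. adjacent y x) vs"
    using vs(1) unfolding is_walk_iff_successively
    by (blast intro: successively_mono adjacent_commute[THEN iffD1])
  ultimately have "is_closed_walk (us @ rev vs)"
    using us vs assms(3)
    unfolding is_closed_walk_def is_walk_iff_successively
    by (auto simp: successively_append_iff hd_rev last_rev)
  then have "walk_sum \<theta> z (us @ rev vs) = 0" by (rule walk_sum_closed[OF assms(2)])
  then show ?thesis
    using \<open>us \<noteq> []\<close> \<open>vs \<noteq> []\<close> us vs
    by (simp add: walk_sum_append walk_sum_rev hd_rev)
qed

section \<open>Products in the incidence algebra\<close>

lemma inc_mult_less:
  fixes f g :: "'a::{order,finite} \<Rightarrow> 'a \<Rightarrow> 'k::field"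
  assumes "x < y"
  shows "inc_mult f g x y = f x x * g x y + f x y * g y y + (\<Sum>t\<in>{t. x < t \<and> t < y}. f x t * g t y)"
proof -
  have "{t. x \<le> t \<and> t \<le> y} = insert x (insert y {t. x < t \<and> t < y})"
    using assms by (auto simp: order_le_less)
  then show ?thesis
    unfolding inc_mult_def using assms by (simp add: add.assoc)
qed

lemma inc_mult_refl: "inc_mult f g x x = f x x * g x (x::'a::{order,finite})"
proof -
  have "{t. x \<le> t \<and> t \<le> x} = {x}" by auto
  then show ?thesis unfolding inc_mult_def by simp
qed

lemma inc_mult_not_le: "\<not> x \<le> y \<Longrightarrow> inc_mult f g x (y::'a::{order,finite}) = 0"
  unfolding inc_mult_def by (metis (no_types, lifting) empty_Collect_eq order_trans sum.empty)

lemma inc_mult_inc_e: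
  fixes a b c :: "'a::{order,finite}"
  assumes "a < b" "b < c"
  shows "inc_mult (inc_e a b) (inc_e b c) = (inc_e a c :: 'a \<Rightarrow> 'a \<Rightarrow> 'k::field)"
proof (intro ext)
  fix x y
  have "inc_mult (inc_e a b) (inc_e b c) x y =
      (\<Sum>t\<in>{t. x \<le> t \<and> t \<le> y}. if t = b then inc_e a c x y else 0 :: 'k)"
    unfolding inc_mult_def inc_e_def by (rule sum.cong) auto
  also have "\<dots> = inc_e a c x y"
    using assms by (auto simp: inc_e_def)
  finally show "inc_mult (inc_e a b) (inc_e b c) x y = (inc_e a c x y :: 'k)" .
qed

lemma lie_bracket_less:
  fixes f g :: "'a::{order,finite} \<Rightarrow> 'a \<Rightarrow> 'k::field"
  assumes "x < y"
  shows "lie_bracket f g x y = (f x x - f y y) * g x y - (g x x - g y y) * f x y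
    + (\<Sum>t\<in>{t. x < t \<and> t < y}. f x t * g t y - g x t * f t y)"
  unfolding lie_bracket_def inc_mult_less[OF assms] sum_subtractf by (simp add: algebra_simps)

lemma lie_bracket_refl: "lie_bracket f g x (x::'a::{order,finite}) = 0"
  unfolding lie_bracket_def inc_mult_refl by simp

lemma lie_bracket_not_le: "\<not> x \<le> y \<Longrightarrow> lie_bracket f g x (y::'a::{order,finite}) = 0"
  unfolding lie_bracket_def by (simp add: inc_mult_not_le)

section \<open>Maps that are monotone on maximal chains\<close>

definition chain_image :: "('a::order \<times> 'a \<Rightarrow> 'a \<times> 'a) \<Rightarrow> 'a list \<Rightarrow> 'a list \<Rightarrow> bool" where
  "chain_image \<theta> us vs \<longleftrightarrow> is_max_chain vs \<and> length vs = length us \<and>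
     ((\<forall>i j. i < j \<and> j < length us \<longrightarrow> \<theta> (us ! i, us ! j) = (vs ! i, vs ! j)) \<or>
      (\<forall>i j. i < j \<and> j < length us \<longrightarrow>
         \<theta> (us ! i, us ! j) = (vs ! (length us - 1 - j), vs ! (length us - 1 - i))))"

definition chain_pairs :: "'a list \<Rightarrow> ('a \<times> 'a) set" where
  "chain_pairs us = {(us ! i, us ! j) | i j. i < j \<and> j < length us}"

definition triple_image ::
    "('a \<times> 'a \<Rightarrow> 'a \<times> 'a) \<Rightarrow> 'a \<Rightarrow> 'a \<Rightarrow> 'a \<Rightarrow> 'a \<Rightarrow> 'a \<Rightarrow> 'a \<Rightarrow> bool" where
  "triple_image \<theta> x y z a b c \<longleftrightarrow> \<theta> (x, z) = (a, c) \<and>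
     (\<theta> (x, y) = (a, b) \<and> \<theta> (y, z) = (b, c) \<or> \<theta> (y, z) = (a, b) \<and> \<theta> (x, y) = (b, c))"

lemma chain_pairs_strict: "is_max_chain us \<Longrightarrow> chain_pairs us \<subseteq> strict_pairs"
  unfolding chain_pairs_def strict_pairs_def using max_chain_nth_less_iff by fastforce

lemma set_eq_chain_pairs:
  assumes "2 \<le> length us"
  shows "set us = fst ` chain_pairs us \<union> snd ` chain_pairs us"
proof
  show "set us \<subseteq> fst ` chain_pairs us \<union> snd ` chain_pairs us"
  proof
    fix x assume "x \<in> set us"
    then obtain k where k: "k < length us" "x = us ! k" by (metis in_set_conv_nth)
    show "x \<in> fst ` chain_pairs us \<union> snd ` chain_pairs us"
    proof (cases "k = 0")
      case True
      then have "(x, us ! 1) \<in> chain_pairs us" unfolding chain_pairs_def using assms k by force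
      then show ?thesis by force
    next
      case False
      then have "(us ! 0, x) \<in> chain_pairs us" unfolding chain_pairs_def using k by force
      then show ?thesis by force
    qed
  qed
qed (auto simp: chain_pairs_def)

lemma chain_image_pair:
  assumes "chain_image \<theta> us vs" "i < j" "j < length us"
  obtains i' j' where "i' < j'" "j' < length vs" "j' - i' = j - i"
    "\<theta> (us ! i, us ! j) = (vs ! i', vs ! j')"
  using assms unfolding chain_image_def
proof (elim conjE disjE)
  let ?m = "length us"
  assume "\<forall>i j. i < j \<and> j < ?m \<longrightarrow> \<theta> (us ! i, us ! j) = (vs ! (?m - 1 - j), vs ! (?m - 1 - i))"
    "length vs = ?m"
  then show thesis using that[of "?m - 1 - j" "?m - 1 - i"] assms(2,3) by auto
next
  assume "\<forall>i j. i < j \<and> j < length us \<longrightarrow> \<theta> (us ! i, us ! j) = (vs ! i, vs ! j)"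
    "length vs = length us"
  then show thesis using that[of i j] assms(2,3) by auto
qed

lemma chain_image_pair_inv:
  assumes "chain_image \<theta> us vs" "i < j" "j < length vs"
  obtains i' j' where "i' < j'" "j' < length us" "j' - i' = j - i"
    "\<theta> (us ! i', us ! j') = (vs ! i, vs ! j)"
  using assms unfolding chain_image_def
proof (elim conjE disjE)
  let ?m = "length us"
  assume "\<forall>i j. i < j \<and> j < ?m \<longrightarrow> \<theta> (us ! i, us ! j) = (vs ! (?m - 1 - j), vs ! (?m - 1 - i))"
    "length vs = ?m"
  then show thesis using that[of "?m - 1 - j" "?m - 1 - i"] assms(2,3) by auto
next
  assume "\<forall>i j. i < j \<and> j < length us \<longrightarrow> \<theta> (us ! i, us ! j) = (vs ! i, vs ! j)"
    "length vs = length us"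
  then show thesis using that[of i j] assms(2,3) by auto
qed

lemma chain_image_chain_pairs:
  assumes "chain_image \<theta> us vs"
  shows "\<theta> ` chain_pairs us = chain_pairs vs"
proof
  show "\<theta> ` chain_pairs us \<subseteq> chain_pairs vs"
  proof
    fix p assume "p \<in> \<theta> ` chain_pairs us"
    then obtain i j where "i < j" "j < length us" "p = \<theta> (us ! i, us ! j)"
      unfolding chain_pairs_def by blast
    then obtain i' j' where "i' < j'" "j' < length vs" "p = (vs ! i', vs ! j')"
      using chain_image_pair[OF assms] by metis
    then show "p \<in> chain_pairs vs" unfolding chain_pairs_def by blast
  qed
  show "chain_pairs vs \<subseteq> \<theta> ` chain_pairs us"
  proof
    fix p assume "p \<in> chain_pairs vs"
    then obtain i j where "i < j" "j < length vs" "p = (vs ! i, vs ! j)"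
      unfolding chain_pairs_def by blast
    then obtain i' j' where "i' < j'" "j' < length us" "p = \<theta> (us ! i', us ! j')"
      using chain_image_pair_inv[OF assms] by metis
    then show "p \<in> \<theta> ` chain_pairs us" unfolding chain_pairs_def by blast
  qed
qed

lemma chain_image_triple:
  assumes "chain_image \<theta> us vs" "i < j" "j < k" "k < length us"
  shows "\<exists>i' j' k'. i' < j' \<and> j' < k' \<and> k' < length vs \<and>
    triple_image \<theta> (us ! i) (us ! j) (us ! k) (vs ! i') (vs ! j') (vs ! k')"
  using assms(1) unfolding chain_image_def
proof (elim conjE disjE)
  let ?m = "length us"
  assume rev: "\<forall>i j. i < j \<and> j < ?m \<longrightarrow>
      \<theta> (us ! i, us ! j) = (vs ! (?m - 1 - j), vs ! (?m - 1 - i))"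
    and "length vs = ?m"
  have "\<theta> (us ! i, us ! j) = (vs ! (?m - 1 - j), vs ! (?m - 1 - i))"
    "\<theta> (us ! i, us ! k) = (vs ! (?m - 1 - k), vs ! (?m - 1 - i))"
    "\<theta> (us ! j, us ! k) = (vs ! (?m - 1 - k), vs ! (?m - 1 - j))"
    using rev[rule_format, of i j] rev[rule_format, of i k] rev[rule_format, of j k] assms(2-4)
    by simp_all
  moreover have "?m - 1 - k < ?m - 1 - j" "?m - 1 - j < ?m - 1 - i" "?m - 1 - i < length vs"
    using assms(2-4) \<open>length vs = ?m\<close> by linarith+
  ultimately show ?thesis
    unfolding triple_image_def by (intro exI[of _ "?m - 1 - k"] exI[of _ "?m - 1 - j"]
        exI[of _ "?m - 1 - i"]) simp
next
  assume dir: "\<forall>i j. i < j \<and> j < length us \<longrightarrow> \<theta> (us ! i, us ! j) = (vs ! i, vs ! j)"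
    and "length vs = length us"
  have "\<theta> (us ! i, us ! j) = (vs ! i, vs ! j)" "\<theta> (us ! i, us ! k) = (vs ! i, vs ! k)"
    "\<theta> (us ! j, us ! k) = (vs ! j, vs ! k)"
    using dir[rule_format, of i j] dir[rule_format, of i k] dir[rule_format, of j k] assms(2-4)
    by simp_all
  then show ?thesis
    using assms(2-4) \<open>length vs = length us\<close> unfolding triple_image_def
    by (intro exI[of _ i] exI[of _ j] exI[of _ k]) simp
qed

lemma chain_image_triple_inv:
  assumes "chain_image \<theta> us vs" "i < j" "j < k" "k < length vs"
  shows "\<exists>i' j' k'. i' < j' \<and> j' < k' \<and> k' < length us \<and>
    triple_image \<theta> (us ! i') (us ! j') (us ! k') (vs ! i) (vs ! j) (vs ! k)"
  using assms(1) unfolding chain_image_def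
proof (elim conjE disjE)
  let ?m = "length us"
  let ?i = "?m - 1 - k" and ?j = "?m - 1 - j" and ?k = "?m - 1 - i"
  assume rev: "\<forall>i j. i < j \<and> j < ?m \<longrightarrow>
      \<theta> (us ! i, us ! j) = (vs ! (?m - 1 - j), vs ! (?m - 1 - i))"
    and "length vs = ?m"
  have idx: "?i < ?j" "?j < ?k" "?k < ?m" "?m - 1 - ?i = k" "?m - 1 - ?j = j" "?m - 1 - ?k = i"
    using assms(2-4) \<open>length vs = ?m\<close> by linarith+
  have "\<theta> (us ! ?i, us ! ?j) = (vs ! j, vs ! k)" "\<theta> (us ! ?i, us ! ?k) = (vs ! i, vs ! k)"
    "\<theta> (us ! ?j, us ! ?k) = (vs ! i, vs ! j)"
    using rev[rule_format, of ?i ?j] rev[rule_format, of ?i ?k] rev[rule_format, of ?j ?k] idx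
    by simp_all
  then show ?thesis
    using idx unfolding triple_image_def by (intro exI[of _ ?i] exI[of _ ?j] exI[of _ ?k]) simp
next
  assume dir: "\<forall>i j. i < j \<and> j < length us \<longrightarrow> \<theta> (us ! i, us ! j) = (vs ! i, vs ! j)"
    and "length vs = length us"
  have "\<theta> (us ! i, us ! j) = (vs ! i, vs ! j)" "\<theta> (us ! i, us ! k) = (vs ! i, vs ! k)"
    "\<theta> (us ! j, us ! k) = (vs ! j, vs ! k)"
    using dir[rule_format, of i j] dir[rule_format, of i k] dir[rule_format, of j k] assms(2-4)
      \<open>length vs = length us\<close> by simp_all
  then show ?thesis
    using assms(2-4) \<open>length vs = length us\<close> unfolding triple_image_def
    by (intro exI[of _ i] exI[of _ j] exI[of _ k]) simp
qed

lemma finite_max_chains: "finite {us::'a::{order,finite} list. is_max_chain us \<and> length us = n}"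
  by (rule finite_subset[OF _ finite_lists_length_eq[of "UNIV :: 'a set" n]]) auto

locale chain_monotone =
  fixes \<theta> :: "'a::{order,finite} \<times> 'a \<Rightarrow> 'a \<times> 'a"
  assumes bij: "bij_betw \<theta> strict_pairs strict_pairs"
    and mono: "monotone_on_max_chains \<theta>"
begin

lemma image_less: "x < y \<Longrightarrow> fst (\<theta> (x, y)) < snd (\<theta> (x, y))"
  using bij_betw_apply[OF bij, of "(x, y)"] unfolding strict_pairs_def by (auto simp: case_prod_beta)

lemma image_eq_iff:
  "x < y \<Longrightarrow> x' < y' \<Longrightarrow> \<theta> (x, y) = \<theta> (x', y') \<longleftrightarrow> x = x' \<and> y = y'"
  using bij_betw_imp_inj_on[OF bij] unfolding inj_on_def strict_pairs_def by blast

lemma ex_preimage: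
  assumes "a < b"
  obtains x y where "x < y" "\<theta> (x, y) = (a, b)"
proof -
  have "(a, b) \<in> \<theta> ` strict_pairs"
    using assms bij unfolding bij_betw_def strict_pairs_def by auto
  then show thesis using that unfolding strict_pairs_def by auto
qed

lemma ex_chain_image: "is_max_chain us \<Longrightarrow> \<exists>vs. chain_image \<theta> us vs"
  using mono unfolding monotone_on_max_chains_def chain_image_def by blast

text \<open>\<theta> induces an injective self-map of the finite set of maximal chains of a given length.\<close>
lemma ex_chain_preimage:
  assumes vs: "is_max_chain vs" "2 \<le> length vs"
  obtains us where "is_max_chain us" "chain_image \<theta> us vs"
proof -
  let ?M = "{us::'a list. is_max_chain us \<and> length us = length vs}"
  define F where "F us = (SOME ws. chain_image \<theta> us ws)" for us
  have F: "chain_image \<theta> us (F us)" if "us \<in> ?M" for us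
    unfolding F_def using ex_chain_image that by (blast intro: someI_ex)
  have "F ` ?M \<subseteq> ?M" using F unfolding chain_image_def by auto
  moreover have "inj_on F ?M"
  proof (rule inj_onI)
    fix us1 us2 assume us: "us1 \<in> ?M" "us2 \<in> ?M" and "F us1 = F us2"
    then have "\<theta> ` chain_pairs us1 = \<theta> ` chain_pairs us2"
      using chain_image_chain_pairs F by metis
    then have "chain_pairs us1 = chain_pairs us2"
      using inj_on_image_eq_iff[OF bij_betw_imp_inj_on[OF bij]] chain_pairs_strict us by blast
    then have "set us1 = set us2"
      using set_eq_chain_pairs[of us1] set_eq_chain_pairs[of us2] us vs(2) by simp
    then show "us1 = us2" using sorted_wrt_less_unique us unfolding is_max_chain_def by blast
  qed
  ultimately have "F ` ?M = ?M" using endo_inj_surj[OF finite_max_chains] by blast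
  then obtain us where "us \<in> ?M" "vs = F us" using vs by blast
  then show ?thesis using F that by blast
qed

lemma triple_image_ex:
  assumes "x < y" "y < z"
  obtains a b c where "triple_image \<theta> x y z a b c"
proof -
  have "is_chain {x, y, z}" unfolding is_chain_def using assms by auto
  then obtain us where us: "is_max_chain us" "{x, y, z} \<subseteq> set us"
    using ex_max_chain_superset by metis
  then obtain i j k where ijk: "i < length us" "us ! i = x" "j < length us" "us ! j = y"
    "k < length us" "us ! k = z"
    by (auto simp: in_set_conv_nth)
  have "i < j" "j < k" using ijk assms max_chain_nth_less_iff[OF us(1)] by metis+
  obtain vs where vs: "chain_image \<theta> us vs" using ex_chain_image us by blast
  then show ?thesis
    using chain_image_triple[OF vs \<open>i < j\<close> \<open>j < k\<close>] ijk that by blast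
qed

lemma triple_preimage_ex:
  assumes "a < b" "b < c"
  obtains x y z where "x < y" "y < z" "triple_image \<theta> x y z a b c"
proof -
  have "is_chain {a, b, c}" unfolding is_chain_def using assms by auto
  then obtain vs where vs: "is_max_chain vs" "{a, b, c} \<subseteq> set vs"
    using ex_max_chain_superset by metis
  then obtain i j k where ijk: "i < length vs" "vs ! i = a" "j < length vs" "vs ! j = b"
    "k < length vs" "vs ! k = c"
    by (auto simp: in_set_conv_nth)
  have "i < j" "j < k" using ijk assms max_chain_nth_less_iff[OF vs(1)] by metis+
  then have "2 \<le> length vs" using ijk(5) by linarith
  then obtain us where us: "is_max_chain us" "chain_image \<theta> us vs"
    using ex_chain_preimage[OF vs(1)] by blast
  then obtain i' j' k' where "i' < j'" "j' < k'" "k' < length us"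
    "triple_image \<theta> (us ! i') (us ! j') (us ! k') a b c"
    using chain_image_triple_inv[OF us(2) \<open>i < j\<close> \<open>j < k\<close>] ijk by blast
  then show ?thesis
    using that max_chain_nth_less_iff[OF us(1)] by (meson order.strict_trans)
qed

lemma chain_len_image:
  assumes "x < y"
  shows "chain_len (fst (\<theta> (x, y))) (snd (\<theta> (x, y))) = chain_len x y"
proof (rule antisym)
  obtain a b where ab: "\<theta> (x, y) = (a, b)" by fastforce
  then have "a < b" using image_less[OF assms] by simp
  then obtain vs i j where vs: "is_max_chain vs" "i < j" "j < length vs" "vs ! i = a"
    "vs ! j = b" "chain_len a b = j - i"
    using chain_len_on_max_chain by blast
  have "2 \<le> length vs" using vs(2,3) by linarith
  then obtain us where us: "is_max_chain us" "chain_image \<theta> us vs"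
    using ex_chain_preimage[OF vs(1)] by blast
  obtain i' j' where ij': "i' < j'" "j' < length us" "j' - i' = j - i"
      "\<theta> (us ! i', us ! j') = (vs ! i, vs ! j)"
    using chain_image_pair_inv[OF us(2) vs(2,3)] by blast
  have "us ! i' < us ! j'"
    using max_chain_nth_less_iff[OF us(1)] ij'(1,2) by (meson order.strict_trans)
  then have "us ! i' = x" "us ! j' = y"
    using image_eq_iff[OF _ assms] ij'(4) ab vs(4,5) by auto
  moreover note chain_len_ge_max_chain_nth[OF us(1) less_imp_le[OF ij'(1)] ij'(2)]
  ultimately show "chain_len (fst (\<theta> (x, y))) (snd (\<theta> (x, y))) \<le> chain_len x y"
    using ij'(3) vs(6) ab by simp
next
  obtain us i j where us: "is_max_chain us" "i < j" "j < length us" "us ! i = x" "us ! j = y"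
    "chain_len x y = j - i"
    using chain_len_on_max_chain[OF assms] by blast
  obtain vs where vs: "chain_image \<theta> us vs" using ex_chain_image[OF us(1)] by blast
  obtain i' j' where ij': "i' < j'" "j' < length vs" "j' - i' = j - i"
      "\<theta> (us ! i, us ! j) = (vs ! i', vs ! j')"
    using chain_image_pair[OF vs us(2,3)] by blast
  have "is_max_chain vs" using vs unfolding chain_image_def by blast
  from chain_len_ge_max_chain_nth[OF this less_imp_le[OF ij'(1)] ij'(2)]
  show "chain_len x y \<le> chain_len (fst (\<theta> (x, y))) (snd (\<theta> (x, y)))"
    using ij'(3,4) us(4-6) by simp
qed

lemma triple_image_less:
  assumes "x < y" "y < z" "triple_image \<theta> x y z a b c"
  shows "a < b" "b < c"
  using assms image_less[of x y] image_less[of y z] unfolding triple_image_def by auto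

lemma edge_flow_image:
  assumes "x < y" "\<theta> (x, y) = (a, b)"
  shows "edge_flow \<theta> z a b = of_bool (y = z) - of_bool (x = z)"
proof -
  have "(\<exists>w. w < z \<and> \<theta> (w, z) = (a, b)) \<longleftrightarrow> y = z"
    using assms image_eq_iff by (metis less_trans)
  moreover have "(\<exists>w. z < w \<and> \<theta> (z, w) = (a, b)) \<longleftrightarrow> x = z"
    using assms image_eq_iff by (metis less_trans)
  ultimately show ?thesis unfolding edge_flow_def by simp
qed

lemma edge_flow_add:
  assumes "a < s" "s < b"
  shows "edge_flow \<theta> z a b = edge_flow \<theta> z a s + edge_flow \<theta> z s b"
proof -
  obtain x y t where xyt: "x < y" "y < t" "triple_image \<theta> x y t a s b"
    using triple_preimage_ex[OF assms] by blast
  then have "edge_flow \<theta> z a b = of_bool (t = z) - of_bool (x = z)"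
    using edge_flow_image[of x t] unfolding triple_image_def by auto
  moreover have "edge_flow \<theta> z a s + edge_flow \<theta> z s b
      = of_bool (y = z) - of_bool (x = z) + (of_bool (t = z) - of_bool (y = z))"
    using xyt edge_flow_image[of x y] edge_flow_image[of y t] unfolding triple_image_def by auto
  ultimately show ?thesis by simp
qed

definition mid :: "'a \<Rightarrow> 'a \<Rightarrow> 'a \<Rightarrow> 'a" where
  "mid x t y = (if fst (\<theta> (x, t)) = fst (\<theta> (x, y)) then snd (\<theta> (x, t)) else fst (\<theta> (x, t)))"

lemma mid_eqI:
  assumes "x < t" "t < y" "triple_image \<theta> x t y a s b"
  shows "mid x t y = s"
proof -
  have "a < s" using triple_image_less[OF assms] by blast
  then show ?thesis using assms(3) unfolding triple_image_def mid_def by (auto simp: prod_eq_iff)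
qed

lemma triple_image_mid:
  assumes "x < t" "t < y" "\<theta> (x, y) = (a, b)"
  shows "triple_image \<theta> x t y a (mid x t y) b"
proof -
  obtain a' s b' where s: "triple_image \<theta> x t y a' s b'"
    using triple_image_ex[OF assms(1,2)] by blast
  moreover have "a' = a" "b' = b" using s assms(3) unfolding triple_image_def by auto
  ultimately show ?thesis using mid_eqI[OF assms(1,2)] by simp
qed

lemma bij_betw_mid:
  assumes "x < y" "\<theta> (x, y) = (a, b)"
  shows "bij_betw (\<lambda>t. mid x t y) {t. x < t \<and> t < y} {s. a < s \<and> s < b}"
proof (rule bij_betw_imageI)
  show "inj_on (\<lambda>t. mid x t y) {t. x < t \<and> t < y}"
  proof (rule inj_onI)
    fix t t' assume t: "t \<in> {t. x < t \<and> t < y}" and t': "t' \<in> {t. x < t \<and> t < y}"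
      and "mid x t y = mid x t' y"
    then have "triple_image \<theta> x t y a (mid x t y) b" "triple_image \<theta> x t' y a (mid x t y) b"
      using triple_image_mid[OF _ _ assms(2), of t] triple_image_mid[OF _ _ assms(2), of t'] by auto
    then show "t = t'"
      using t t' image_eq_iff[of x t x t'] image_eq_iff[of t y t' y] image_eq_iff[of x t t' y]
        image_eq_iff[of t y x t'] unfolding triple_image_def by auto
  qed
  show "(\<lambda>t. mid x t y) ` {t. x < t \<and> t < y} = {s. a < s \<and> s < b}"
  proof
    show "(\<lambda>t. mid x t y) ` {t. x < t \<and> t < y} \<subseteq> {s. a < s \<and> s < b}"
      using triple_image_mid[OF _ _ assms(2)] triple_image_less by blast
    show "{s. a < s \<and> s < b} \<subseteq> (\<lambda>t. mid x t y) ` {t. x < t \<and> t < y}"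
    proof
      fix s assume "s \<in> {s. a < s \<and> s < b}"
      then obtain x' t y' where xty: "x' < t" "t < y'" "triple_image \<theta> x' t y' a s b"
        using triple_preimage_ex by blast
      moreover have "x' = x" "y' = y"
        using xty image_eq_iff[of x' y' x y] assms unfolding triple_image_def by auto
      ultimately show "s \<in> (\<lambda>t. mid x t y) ` {t. x < t \<and> t < y}"
        using mid_eqI by (metis (mono_tags, lifting) image_eqI mem_Collect_eq)
    qed
  qed
qed

end

section \<open>The elementary automorphism\<close>

lemma square_matrix_surj_if_inj:
  fixes M :: "'a::finite \<Rightarrow> 'a \<Rightarrow> 'k::field"
  assumes inj: "\<And>\<nu>. (\<And>a. (\<Sum>z\<in>UNIV. \<nu> z * M z a) = 0) \<Longrightarrow> \<nu> = (\<lambda>_. 0)"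
  obtains \<nu> where "\<And>a. (\<Sum>z\<in>UNIV. \<nu> z * M z a) = h a"
proof -
  define A :: "'k^'a^'a" where "A = (\<chi> a z. M z a)"
  have A_mult: "(A *v p) $ a = (\<Sum>z\<in>UNIV. p $ z * M z a)" for p a
    unfolding A_def matrix_vector_mult_def by (simp add: mult.commute)
  have "inj ((*v) A)"
  proof (rule injI)
    fix p q assume "A *v p = A *v q"
    then have "(\<Sum>z\<in>UNIV. (p $ z - q $ z) * M z a) = 0" for a
      using A_mult[of p a] A_mult[of q a] by (simp add: sum_subtractf left_diff_distrib)
    then have "(\<lambda>z. p $ z - q $ z) = (\<lambda>_. 0)" by (rule inj)
    then show "p = q" by (simp add: vec_eq_iff fun_eq_iff)
  qed
  then have "surj ((*v) A)"
    using vec.linear_inj_imp_surj[OF matrix_vector_mul_linear_gen] by blast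
  then obtain p where "A *v p = (\<chi> a. h a)" by (metis surjD)
  then show ?thesis using that[of "\<lambda>z. p $ z"] A_mult by (metis vec_lambda_beta)
qed

locale admissible_monotone = chain_monotone \<theta> for \<theta> :: "'a::{order,finite} \<times> 'a \<Rightarrow> 'a \<times> 'a" +
  fixes r :: 'a
  assumes conn: "poset_connected TYPE('a)"
    and adm: "admissible \<theta>"
begin

lemma potential_less:
  assumes "a < b"
  shows "potential \<theta> r z b - potential \<theta> r z a = edge_flow \<theta> z a b"
  using assms
proof (induction "card {s. a < s \<and> s < b}" arbitrary: a b rule: less_induct)
  case less
  show ?case
  proof (cases "covers b a")
    case True
    then have "adjacent a b" unfolding adjacent_def by blast
    then show ?thesis
      using potential_adjacent[OF conn adm] less.prems unfolding walk_step_def by simp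
  next
    case False
    then obtain s where s: "a < s" "s < b" using less.prems unfolding covers_def by blast
    have "card {t. a < t \<and> t < s} < card {t. a < t \<and> t < b}"
      "card {t. s < t \<and> t < b} < card {t. a < t \<and> t < b}"
      using s by (auto intro!: psubset_card_mono)
    then have "potential \<theta> r z s - potential \<theta> r z a = edge_flow \<theta> z a s"
      "potential \<theta> r z b - potential \<theta> r z s = edge_flow \<theta> z s b"
      using less.hyps s by blast+
    then show ?thesis using edge_flow_add[OF s] by simp
  qed
qed

lemma potential_image:
  assumes "x < y"
  shows "potential \<theta> r z (fst (\<theta> (x, y))) - potential \<theta> r z (snd (\<theta> (x, y)))
    = of_bool (x = z) - of_bool (y = z)"
proof -
  have "potential \<theta> r z (snd (\<theta> (x, y))) - potential \<theta> r z (fst (\<theta> (x, y)))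
      = of_bool (y = z) - of_bool (x = z)"
    using potential_less[OF image_less[OF assms]]
      edge_flow_image[OF assms, of "fst (\<theta> (x, y))" "snd (\<theta> (x, y))"] by simp
  then show ?thesis by linarith
qed

end

locale compatible_signs = admissible_monotone \<theta> r
  for \<theta> :: "'a::{order,finite} \<times> 'a \<Rightarrow> 'a \<times> 'a" and r +
  fixes \<sigma> :: "'a \<Rightarrow> 'a \<Rightarrow> 'k::field"
  assumes sigma_nonzero: "\<forall>x y. x < y \<longrightarrow> \<sigma> x y \<noteq> 0"
    and compat: "compatible \<sigma> \<theta>"
begin

text \<open>The potentials alone annihilate the constant functions; adding the indicator of the base
  point \<open>r\<close> makes the diagonal part of the automorphism invertible.\<close>
definition diag_coeff :: "'a \<Rightarrow> 'a \<Rightarrow> 'k" where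
  "diag_coeff z a = of_int (potential \<theta> r z a) + of_bool (z = r)"

definition diag_part :: "('a \<Rightarrow> 'k) \<Rightarrow> 'a \<Rightarrow> 'k" where
  "diag_part h a = (\<Sum>z\<in>UNIV. h z * diag_coeff z a)"

definition phi :: "('a \<Rightarrow> 'a \<Rightarrow> 'k) \<Rightarrow> 'a \<Rightarrow> 'a \<Rightarrow> 'k" where
  "phi f a b =
     (if a < b then (case inv_into strict_pairs \<theta> (a, b) of (x, y) \<Rightarrow> \<sigma> x y * f x y)
      else if a = b then diag_part (\<lambda>z. f z z) a else 0)"

lemma diag_part_image:
  assumes "x < y" "\<theta> (x, y) = (a, b)"
  shows "diag_part h a - diag_part h b = h x - h y"
proof -
  have "diag_coeff z a - diag_coeff z b = of_bool (x = z) - of_bool (y = z)" for z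
    using potential_image[OF assms(1), of z] assms(2) unfolding diag_coeff_def
    by (simp flip: of_int_diff)
  then have "diag_part h a - diag_part h b = (\<Sum>z\<in>UNIV. h z * (of_bool (x = z) - of_bool (y = z)))"
    unfolding diag_part_def by (simp flip: sum_subtractf right_diff_distrib)
  also have "\<dots> = h x - h y"
    by (simp add: right_diff_distrib sum_subtractf if_distrib[of "(*) _"] cong: if_cong)
  finally show ?thesis .
qed

lemma diag_part_base: "diag_part h r = h r"
  unfolding diag_part_def diag_coeff_def potential_base[OF conn adm]
  by (simp add: if_distrib[of "(*) _"] cong: if_cong)

lemma diag_part_diff: "diag_part (\<lambda>z. h z - h' z) a = diag_part h a - diag_part h' a"
  unfolding diag_part_def by (simp add: left_diff_distrib sum_subtractf)

lemma diag_part_eq_0: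
  assumes "\<And>a. diag_part h a = 0"
  shows "h = (\<lambda>_. 0)"
proof -
  have "h x = h y" if "x < y" for x y
    using diag_part_image[OF that] assms by (metis prod.collapse right_minus_eq)
  then have "h z = h r" for z by (rule connected_const[OF conn])
  moreover have "h r = 0" using diag_part_base assms by metis
  ultimately show ?thesis by auto
qed

lemma ex_diag_part_eq: obtains h where "\<And>a. diag_part h a = g a"
  using square_matrix_surj_if_inj[of diag_coeff g] diag_part_eq_0 unfolding diag_part_def by blast

lemma compatible_triple:
  assumes "x < t" "t < y" "triple_image \<theta> x t y a s b"
  shows "\<theta> (x, t) = (a, s) \<and> \<theta> (t, y) = (s, b) \<and> \<sigma> x y = \<sigma> x t * \<sigma> t y \<or>
    \<theta> (t, y) = (a, s) \<and> \<theta> (x, t) = (s, b) \<and> \<sigma> x y = - (\<sigma> x t * \<sigma> t y)"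
proof -
  have "inc_mult (inc_e a s) (inc_e s b) = (inc_e a b :: 'a \<Rightarrow> 'a \<Rightarrow> 'k)"
    using inc_mult_inc_e triple_image_less[OF assms] by blast
  then show ?thesis
    using compat assms unfolding compatible_def triple_image_def by fastforce
qed

lemma phi_image:
  assumes "x < y" "\<theta> (x, y) = (a, b)"
  shows "phi f a b = \<sigma> x y * f x y"
proof -
  have "(x, y) \<in> strict_pairs" using assms(1) unfolding strict_pairs_def by simp
  then have "inv_into strict_pairs \<theta> (a, b) = (x, y)"
    using assms(2) inv_into_f_f[OF bij_betw_imp_inj_on[OF bij]] by metis
  then show ?thesis using image_less[OF assms(1)] assms(2) unfolding phi_def by simp
qed

lemma phi_refl: "phi f a a = diag_part (\<lambda>z. f z z) a"
  unfolding phi_def by simp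

lemma phi_not_le: "\<not> a \<le> b \<Longrightarrow> phi f a b = 0"
  unfolding phi_def by auto

lemma phi_mid:
  assumes "x < t" "t < y" "\<theta> (x, y) = (a, b)"
  shows "phi f a (mid x t y) * phi g (mid x t y) b - phi g a (mid x t y) * phi f (mid x t y) b
    = \<sigma> x y * (f x t * g t y - g x t * f t y)"
  using compatible_triple[OF assms(1,2) triple_image_mid[OF assms]]
proof (elim disjE conjE)
  assume "\<theta> (x, t) = (a, mid x t y)" "\<theta> (t, y) = (mid x t y, b)"
    "\<sigma> x y = \<sigma> x t * \<sigma> t y"
  then show ?thesis using phi_image assms(1,2) by (simp add: algebra_simps)
next
  assume "\<theta> (t, y) = (a, mid x t y)" "\<theta> (x, t) = (mid x t y, b)"
    "\<sigma> x y = - (\<sigma> x t * \<sigma> t y)"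
  then show ?thesis using phi_image assms(1,2) by (simp add: algebra_simps)
qed

lemma phi_bracket: "phi (lie_bracket f g) = lie_bracket (phi f) (phi g)"
proof (intro ext)
  fix a b :: 'a
  consider "a < b" | "a = b" | "\<not> a \<le> b" by (meson order_le_less)
  then show "phi (lie_bracket f g) a b = lie_bracket (phi f) (phi g) a b"
  proof cases
    case 1
    then obtain x y where xy: "x < y" "\<theta> (x, y) = (a, b)" by (rule ex_preimage)
    let ?F = "\<lambda>s. phi f a s * phi g s b - phi g a s * phi f s b"
    have "(\<Sum>s\<in>{s. a < s \<and> s < b}. ?F s) = (\<Sum>t\<in>{t. x < t \<and> t < y}. ?F (mid x t y))"
      by (rule sum.reindex_bij_betw[OF bij_betw_mid[OF xy], symmetric])
    also have "\<dots> = (\<Sum>t\<in>{t. x < t \<and> t < y}. \<sigma> x y * (f x t * g t y - g x t * f t y))"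
      using phi_mid[OF _ _ xy(2)] by (intro sum.cong) auto
    finally have middle: "(\<Sum>s\<in>{s. a < s \<and> s < b}. ?F s)
        = \<sigma> x y * (\<Sum>t\<in>{t. x < t \<and> t < y}. f x t * g t y - g x t * f t y)"
      by (simp add: sum_distrib_left)
    have diag: "phi f a a - phi f b b = f x x - f y y" "phi g a a - phi g b b = g x x - g y y"
      unfolding phi_refl using diag_part_image[OF xy] by simp_all
    show ?thesis
      unfolding lie_bracket_less[OF 1] lie_bracket_less[OF xy(1)] phi_image[OF xy] middle diag
      by algebra
  qed (simp_all add: phi_refl phi_not_le lie_bracket_refl lie_bracket_not_le diag_part_def)
qed

lemma phi_add: "phi (inc_add f g) = inc_add (phi f) (phi g)"
  unfolding phi_def inc_add_def diag_part_def
  by (intro ext) (simp add: distrib_left distrib_right sum.distrib split: prod.split)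

lemma phi_smult: "phi (inc_smult c f) = inc_smult c (phi f)"
  unfolding phi_def inc_smult_def diag_part_def
  by (intro ext) (simp add: sum_distrib_left mult.assoc mult.left_commute split: prod.split)

lemma phi_in_inc_alg: "phi f \<in> inc_alg"
  unfolding inc_alg_def using phi_not_le by blast

lemma phi_inj:
  assumes "f \<in> inc_alg" "g \<in> inc_alg" "phi f = phi g"
  shows "f = g"
proof (intro ext)
  fix x y :: 'a
  consider "x < y" | "x = y" | "\<not> x \<le> y" by (meson order_le_less)
  then show "f x y = g x y"
  proof cases
    case 1
    obtain a b where ab: "\<theta> (x, y) = (a, b)" by (cases "\<theta> (x, y)")
    have "\<sigma> x y * f x y = phi f a b" by (rule phi_image[OF 1 ab, symmetric])
    also have "\<dots> = \<sigma> x y * g x y" unfolding assms(3) by (rule phi_image[OF 1 ab])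
    finally show ?thesis using sigma_nonzero 1 by simp
  next
    case 2
    have "diag_part (\<lambda>z. f z z - g z z) a = 0" for a
      unfolding diag_part_diff using phi_refl[of f a] phi_refl[of g a] assms(3) by simp
    then have "(\<lambda>z. f z z - g z z) = (\<lambda>_. 0)" by (rule diag_part_eq_0)
    then show ?thesis using 2 by (simp add: fun_eq_iff)
  next
    case 3
    then show ?thesis using assms(1,2) unfolding inc_alg_def by simp
  qed
qed

lemma phi_surj:
  assumes "g \<in> inc_alg"
  obtains f where "f \<in> inc_alg" "phi f = g"
proof -
  obtain h where h: "\<And>a. diag_part h a = g a a" using ex_diag_part_eq[of "\<lambda>a. g a a"] by blast
  define f where "f x y =
    (if x < y then g (fst (\<theta> (x, y))) (snd (\<theta> (x, y))) / \<sigma> x y else if x = y then h x else 0)"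
    for x y
  have "f \<in> inc_alg" unfolding inc_alg_def f_def by (auto simp: order_le_less)
  moreover have "phi f = g"
  proof (intro ext)
    fix a b :: 'a
    consider "a < b" | "a = b" | "\<not> a \<le> b" by (meson order_le_less)
    then show "phi f a b = g a b"
    proof cases
      case 1
      then obtain x y where xy: "x < y" "\<theta> (x, y) = (a, b)" by (rule ex_preimage)
      then show ?thesis using phi_image[OF xy] sigma_nonzero unfolding f_def by simp
    next
      case 2
      then show ?thesis using h by (simp add: phi_refl f_def)
    next
      case 3
      then show ?thesis using assms phi_not_le unfolding inc_alg_def by simp
    qed
  qed
  ultimately show ?thesis using that by blast
qed

lemma bij_betw_phi: "bij_betw phi inc_alg inc_alg"
  unfolding bij_betw_def
proof
  show "inj_on phi inc_alg" using phi_inj by (meson inj_onI)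
  show "phi ` inc_alg = inc_alg"
    using phi_in_inc_alg phi_surj by (metis image_subsetI subsetI subset_antisym image_eqI)
qed

lemma phi_L_space:
  assumes "f \<in> L_space i"
  shows "phi f \<in> L_space i"
  unfolding L_space_def
proof (intro CollectI allI impI)
  fix a b :: 'a assume nz: "phi f a b \<noteq> 0"
  consider "a < b" | "a = b" | "\<not> a \<le> b" by (meson order_le_less)
  then show "a \<le> b \<and> chain_len a b = i"
  proof cases
    case 1
    then obtain x y where xy: "x < y" "\<theta> (x, y) = (a, b)" by (rule ex_preimage)
    then have "f x y \<noteq> 0" using nz phi_image[OF xy] by simp
    then have "chain_len x y = i" using assms unfolding L_space_def by blast
    moreover have "chain_len a b = chain_len x y" using chain_len_image[OF xy(1)] xy(2) by simp
    ultimately show ?thesis using 1 by simp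
  next
    case 2
    then have "(\<Sum>z\<in>UNIV. f z z * diag_coeff z a) \<noteq> 0"
      using nz by (simp add: phi_refl diag_part_def)
    then obtain z where "f z z * diag_coeff z a \<noteq> 0"
      by (rule sum.not_neutral_contains_not_neutral)
    then have "chain_len z z = i" using assms unfolding L_space_def by simp
    then show ?thesis using 2 by (simp add: chain_len_refl)
  next
    case 3
    then show ?thesis using nz phi_not_le by blast
  qed
qed

lemma phi_inc_e:
  assumes "x < y"
  shows "phi (inc_e x y) = inc_smult (\<sigma> x y) (inc_e (fst (\<theta> (x, y))) (snd (\<theta> (x, y))))"
proof (intro ext)
  fix a b :: 'a
  have xy: "fst (\<theta> (x, y)) < snd (\<theta> (x, y))" by (rule image_less[OF assms])
  consider "a < b" | "a = b" | "\<not> a \<le> b" by (meson order_le_less)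
  then show "phi (inc_e x y) a b = inc_smult (\<sigma> x y) (inc_e (fst (\<theta> (x, y))) (snd (\<theta> (x, y)))) a b"
  proof cases
    case 1
    then obtain x' y' where xy': "x' < y'" "\<theta> (x', y') = (a, b)" by (rule ex_preimage)
    then have "\<theta> (x, y) = (a, b) \<longleftrightarrow> x' = x \<and> y' = y"
      using image_eq_iff[OF assms xy'(1)] by auto
    then show ?thesis
      using phi_image[OF xy'] unfolding inc_smult_def inc_e_def by (auto simp: prod_eq_iff)
  next
    case 2
    have "inc_e x y z z = (0 :: 'k)" for z using assms by (auto simp: inc_e_def)
    then have "phi (inc_e x y) a a = 0" by (simp add: phi_refl diag_part_def)
    then show ?thesis using 2 xy unfolding inc_smult_def inc_e_def by auto
  next
    case 3
    then show ?thesis using xy phi_not_le unfolding inc_smult_def inc_e_def by auto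
  qed
qed

lemma elementary_phi: "elementary phi"
  unfolding elementary_def lie_automorphism_def
  using bij_betw_phi phi_add phi_smult phi_bracket phi_L_space by blast

end

theorem lemma5p16:
  fixes \<theta> :: "'a::{order,finite} \<times> 'a \<Rightarrow> 'a \<times> 'a"
    and \<sigma> :: "'a \<Rightarrow> 'a \<Rightarrow> 'k::field"
  assumes conn: "poset_connected TYPE('a)"
    and bij: "bij_betw \<theta> strict_pairs strict_pairs"
    and adm: "admissible \<theta>"
    and mono: "monotone_on_max_chains \<theta>"
    and sigma_units: "\<forall>x y. x < y \<longrightarrow> \<sigma> x y \<noteq> 0"
    and compat: "compatible \<sigma> \<theta>"
  shows "\<exists>\<phi>. elementary \<phi> \<and>
           (\<forall>x y. x < y \<longrightarrow>
              \<phi> (inc_e x y) = inc_smult (\<sigma> x y) (inc_e (fst (\<theta> (x, y))) (snd (\<theta> (x, y)))))"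
proof -
  interpret compatible_signs \<theta> undefined \<sigma>
    by unfold_locales fact+
  show ?thesis using elementary_phi phi_inc_e by blast
qed

end
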